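(* Let $\mathbb F$ be any field. The problem of classifying two-dimensional vector subspaces $V\subset \mathbb F^{n\times n}$ ($n=1,2,\dots$) consisting of pairwise commuting matrices, up to similarity $V\mapsto S^{-1}VS:=\{S^{-1}AS\mid A\in V\}$ with nonsingular $S\in\mathbb F^{n\times n}$, is wild. Moreover, if $\mathbb F$ is not the field with two elements, then the problem of classifying, up to the same similarity, those two-dimensional vector spaces of commuting $n\times n$ matrices over $\mathbb F$ that contain a nonsingular matrix is also wild.
   Context: Two pairs $(M,N)$, $(M',N')$ of $n\times n$ matrices over $\mathbb F$ are similar if $(S^{-1}MS,S^{-1}NS)=(M',N')$ for some nonsingular $S$. A matrix classification problem $\mathcal M$ is given by a set $\mathcal M_1$ of tuples of matrices over $\mathbb F$ and a set $\mathcal M_2$ of admissible transformations on them. It is called wild if there is a tuple $M(x,y)=(M_1(x,y),\dots,M_t(x,y))$ of matrices whose entries are noncommutative polynomials in $x,y$ over $\mathbb F$ such that (i) $M(A,B)\in\mathcal M_1$ for all $A,B\in\mathbb F^{n\times n}$ and all $n\ge1$ (each scalar entry $\alpha$ being replaced by $\alpha I_n$), and (ii) $M(A,B)$ can be carried to $M(A',B')$ by transformations from $\mathcal M_2$ if and only if the pairs $(A,B)$ and $(A',B')$ are similar. (A two-dimensional space of matrices is represented by a basis $(A,B)$, determined up to change of basis.) *)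

theory Defs
  imports "Jordan_Normal_Form.Matrix"
begin

datatype 'a ncpoly = NCConst 'a | NCX | NCY
  | NCAdd "'a ncpoly" "'a ncpoly" | NCMul "'a ncpoly" "'a ncpoly"

fun nc_eval :: "nat \<Rightarrow> 'a::field ncpoly \<Rightarrow> 'a mat \<Rightarrow> 'a mat \<Rightarrow> 'a mat" where
  "nc_eval n (NCConst c) A B = c \<cdot>\<^sub>m 1\<^sub>m n"
| "nc_eval n NCX A B = A"
| "nc_eval n NCY A B = B"
| "nc_eval n (NCAdd p q) A B = nc_eval n p A B + nc_eval n q A B"
| "nc_eval n (NCMul p q) A B = nc_eval n p A B * nc_eval n q A B"

text \<open>Substituting n x n matrices A, B into a k x k matrix of noncommutative
 polynomials gives the (k n) x (k n) block matrix.\<close>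
definition nc_subst :: "nat \<Rightarrow> 'a::field ncpoly mat \<Rightarrow> 'a mat \<Rightarrow> 'a mat \<Rightarrow> 'a mat" where
  "nc_subst n M A B = mat (dim_row M * n) (dim_col M * n)
     (\<lambda>(i, j). nc_eval n (M $$ (i div n, j div n)) A B $$ (i mod n, j mod n))"

definition similar_pairs :: "nat \<Rightarrow> 'a::field mat \<Rightarrow> 'a mat \<Rightarrow> 'a mat \<Rightarrow> 'a mat \<Rightarrow> bool" where
  "similar_pairs n A B A' B' \<longleftrightarrow>
     (\<exists>S T. S \<in> carrier_mat n n \<and> T \<in> carrier_mat n n \<and> S * T = 1\<^sub>m n \<and> T * S = 1\<^sub>m n
        \<and> T * A * S = A' \<and> T * B * S = B')"

definition span2 :: "'a::field mat \<Rightarrow> 'a mat \<Rightarrow> 'a mat set" where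
  "span2 P Q = {a \<cdot>\<^sub>m P + b \<cdot>\<^sub>m Q | a b. True}"

definition similar_spaces :: "'a::field mat \<Rightarrow> 'a mat \<Rightarrow> 'a mat \<Rightarrow> 'a mat \<Rightarrow> bool" where
  "similar_spaces P Q P' Q' \<longleftrightarrow>
     (\<exists>N S T. S \<in> carrier_mat N N \<and> T \<in> carrier_mat N N \<and> S * T = 1\<^sub>m N \<and> T * S = 1\<^sub>m N
        \<and> P \<in> carrier_mat N N \<and> Q \<in> carrier_mat N N
        \<and> P' \<in> carrier_mat N N \<and> Q' \<in> carrier_mat N N
        \<and> (\<lambda>X. T * X * S) ` span2 P Q = span2 P' Q')"

definition comm_2space :: "'a::field mat \<Rightarrow> 'a mat \<Rightarrow> bool" where
  "comm_2space P Q \<longleftrightarrow> (\<exists>N. P \<in> carrier_mat N N \<and> Q \<in> carrier_mat N N \<and>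
     P * Q = Q * P \<and>
     (\<forall>a b. a \<cdot>\<^sub>m P + b \<cdot>\<^sub>m Q = 0\<^sub>m N N \<longrightarrow> a = 0 \<and> b = 0))"

definition comm_2space_nonsing :: "'a::field mat \<Rightarrow> 'a mat \<Rightarrow> bool" where
  "comm_2space_nonsing P Q \<longleftrightarrow> comm_2space P Q \<and>
     (\<exists>X \<in> span2 P Q. invertible_mat X)"

definition wild_2space_problem :: "('a::field mat \<Rightarrow> 'a mat \<Rightarrow> bool) \<Rightarrow> bool" where
  "wild_2space_problem Obj \<longleftrightarrow>
    (\<exists>k M1 M2. M1 \<in> carrier_mat k k \<and> M2 \<in> carrier_mat k k \<and>
      (\<forall>n\<ge>1. \<forall>A \<in> carrier_mat n n. \<forall>B \<in> carrier_mat n n.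
          Obj (nc_subst n M1 A B) (nc_subst n M2 A B)) \<and>
      (\<forall>n\<ge>1. \<forall>A \<in> carrier_mat n n. \<forall>B \<in> carrier_mat n n.
         \<forall>A' \<in> carrier_mat n n. \<forall>B' \<in> carrier_mat n n.
          similar_spaces (nc_subst n M1 A B) (nc_subst n M2 A B)
                         (nc_subst n M1 A' B') (nc_subst n M2 A' B')
          \<longleftrightarrow> similar_pairs n A B A' B'))"

end

theory Submission
  imports Defs "Jordan_Normal_Form.Determinant"
begin

text \<open>
  Substitute n x n matrices A, B into two commuting, strictly block upper triangular 12 x 12
  matrices P(x,y), Q(x,y) of noncommutative polynomials and span the space by U = I + P and Q.
  It contains the unipotent, hence nonsingular, matrix U over every field.
  If a similarity carries span(U, Q) to span(U', Q'), determinants (unipotent versus nilpotent)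
  show that it maps U to U' + b Q' and Q to d Q', and P Q^3 = 0 \<noteq> Q'^4 forces b = 0.
  The products P^3, P^2 Q, P Q^2 and Q^3 are concentrated in the corner block (0, 6), where they
  are I, I, A and B; so the similarity has an invertible corner block \<sigma> with d = 1,
  A \<sigma> = \<sigma> A' and B \<sigma> = \<sigma> B'. Conversely, a similarity of pairs lifts block diagonally.
\<close>

lemma mult_assoc_dims:
  "dim_col A = dim_row B \<Longrightarrow> dim_col B = dim_row C \<Longrightarrow> A * B * C = A * (B * (C::'a::semiring_0 mat))"
  by (rule assoc_mult_mat[of A "dim_row A" "dim_col A" B "dim_col B" C "dim_col C"]) auto

lemma smult_mult_dims: "dim_col A = dim_row B \<Longrightarrow> (k \<cdot>\<^sub>m A) * B = k \<cdot>\<^sub>m (A * (B::'a::comm_semiring_0 mat))"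
  by (rule eq_matI) auto

lemma mult_smult_dims: "dim_col A = dim_row B \<Longrightarrow> A * (k \<cdot>\<^sub>m B) = k \<cdot>\<^sub>m (A * (B::'a::comm_semiring_0 mat))"
  by (rule mult_smult_distrib[of A "dim_row A" "dim_col A" B "dim_col B"]) auto

lemma smult_smult_mat: "k \<cdot>\<^sub>m (l \<cdot>\<^sub>m A) = (k * l) \<cdot>\<^sub>m (A::'a::semigroup_mult mat)"
  by (rule eq_matI) (auto simp: mult.assoc)

lemma one_smult_mat: "(1::'a::monoid_mult) \<cdot>\<^sub>m A = A"
  by (rule eq_matI) auto

lemma mult_add_dims: "dim_col A = dim_row B \<Longrightarrow> dim_row C = dim_row B \<Longrightarrow> dim_col C = dim_col B \<Longrightarrow>
   A * (B + C) = A * B + A * (C::'a::semiring_0 mat)"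
  by (rule mult_add_distrib_mat[of A "dim_row A" "dim_col A" B "dim_col B"]) auto

lemma add_mult_dims: "dim_col A = dim_row C \<Longrightarrow> dim_row B = dim_row A \<Longrightarrow> dim_col B = dim_col A \<Longrightarrow>
   (A + B) * C = A * C + B * (C::'a::semiring_0 mat)"
  by (rule add_mult_distrib_mat[of A "dim_row A" "dim_col A" B C "dim_col C"]) auto

lemma smult_add_dims: "dim_row A = dim_row B \<Longrightarrow> dim_col A = dim_col B \<Longrightarrow>
  k \<cdot>\<^sub>m (A + B) = k \<cdot>\<^sub>m A + k \<cdot>\<^sub>m (B::'a::semiring mat)"
  by (rule eq_matI) (auto simp: distrib_left)

lemma smult_eq_zero_mat:
  assumes "k \<cdot>\<^sub>m M = 0\<^sub>m (dim_row M) (dim_col M)" and "M \<noteq> 0\<^sub>m (dim_row M) (dim_col M)"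
  shows "(k::'a::field) = 0"
proof (rule ccontr)
  assume k: "k \<noteq> 0"
  from assms(2) obtain i j where ij: "i < dim_row M" "j < dim_col M" "M $$ (i,j) \<noteq> 0"
    by (metis eq_matI index_zero_mat(1) index_zero_mat(2) index_zero_mat(3))
  have "(k \<cdot>\<^sub>m M) $$ (i,j) = 0" using assms(1) ij by simp
  thus False using ij k by simp
qed

lemma smult_fixed_mat_eq_one:
  assumes "d \<cdot>\<^sub>m M = M" and "M \<noteq> 0\<^sub>m (dim_row M) (dim_col M)"
  shows "(d::'a::field) = 1"
proof -
  have "(1 - d) \<cdot>\<^sub>m M = 0\<^sub>m (dim_row M) (dim_col M)"
  proof (rule eq_matI)
    fix i j assume "i < dim_row (0\<^sub>m (dim_row M) (dim_col M) :: 'a mat)"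
      "j < dim_col (0\<^sub>m (dim_row M) (dim_col M) :: 'a mat)"
    moreover have "(d \<cdot>\<^sub>m M) $$ (i,j) = M $$ (i,j)" using assms(1) by simp
    ultimately show "((1 - d) \<cdot>\<^sub>m M) $$ (i,j) = 0\<^sub>m (dim_row M) (dim_col M) $$ (i,j)"
      by (simp add: algebra_simps)
  qed auto
  thus ?thesis using smult_eq_zero_mat assms(2) by fastforce
qed

lemma invertible_mat_if_det_nonzero:
  assumes M: "M \<in> carrier_mat N N" and d: "det M \<noteq> (0::'a::field)"
  shows "invertible_mat M"
proof -
  have "M \<in> Units (ring_mat TYPE('a) N undefined)" by (rule det_non_zero_imp_unit[OF M d])
  then obtain B where "B \<in> carrier_mat N N" "B * M = 1\<^sub>m N" "M * B = 1\<^sub>m N"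
    unfolding Units_def ring_mat_def by auto
  thus ?thesis using M unfolding invertible_mat_def inverts_mat_def square_mat.simps
    by (intro conjI exI[of _ B]) auto
qed

definition strictly_upper :: "'a::zero mat \<Rightarrow> bool" where
  "strictly_upper M \<longleftrightarrow> (\<forall>i j. i < dim_row M \<longrightarrow> j < dim_col M \<longrightarrow> j \<le> i \<longrightarrow> M $$ (i,j) = 0)"

lemma det_upper_triangular_const_diag:
  assumes M: "M \<in> carrier_mat N N" and low: "\<And>i j. j < i \<Longrightarrow> i < N \<Longrightarrow> M $$ (i,j) = 0"
    and diag: "\<And>i. i < N \<Longrightarrow> M $$ (i,i) = z"
  shows "det M = (z::'a::field) ^ N"
proof -
  have ut: "upper_triangular M" using M low by (auto intro!: upper_triangularI)
  have "diag_mat M = replicate N z"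
    using M diag by (auto simp: diag_mat_def intro!: nth_equalityI)
  thus ?thesis using det_upper_triangular[OF ut M] by simp
qed

lemma det_strictly_upper:
  assumes "M \<in> carrier_mat N N" "strictly_upper M" "0 < N"
  shows "det (M :: 'a::field mat) = 0"
proof -
  have "det M = 0 ^ N"
    by (rule det_upper_triangular_const_diag) (use assms in \<open>auto simp: strictly_upper_def\<close>)
  thus ?thesis using assms(3) by simp
qed

lemma det_unipotent_comb:
  assumes "P \<in> carrier_mat N N" "Q \<in> carrier_mat N N" "strictly_upper P" "strictly_upper Q"
  shows "det (\<alpha> \<cdot>\<^sub>m (1\<^sub>m N + P) + \<gamma> \<cdot>\<^sub>m Q + \<delta> \<cdot>\<^sub>m 1\<^sub>m N) = (\<alpha> + \<delta> :: 'a::field) ^ N"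
  by (rule det_upper_triangular_const_diag[of _ N]) (use assms in \<open>auto simp: strictly_upper_def\<close>)

section \<open>Block matrices\<close>

definition block_incl :: "nat \<Rightarrow> nat \<Rightarrow> nat \<Rightarrow> 'a::field mat" where
  "block_incl k n g = mat (k*n) n (\<lambda>(x,y). if x = g*n + y then 1 else 0)"

definition block_proj :: "nat \<Rightarrow> nat \<Rightarrow> nat \<Rightarrow> 'a::field mat" where
  "block_proj k n g = mat n (k*n) (\<lambda>(x,y). if y = g*n + x then 1 else 0)"

lemma block_incl_carrier[simp]: "block_incl k n g \<in> carrier_mat (k*n) n"
  and block_incl_dims[simp]: "dim_row (block_incl k n g) = k*n" "dim_col (block_incl k n g) = n"
  by (simp_all add: block_incl_def)

lemma block_proj_carrier[simp]: "block_proj k n g \<in> carrier_mat n (k*n)"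
  and block_proj_dims[simp]: "dim_row (block_proj k n g) = n" "dim_col (block_proj k n g) = k*n"
  by (simp_all add: block_proj_def)

lemma block_index_less: "g < k \<Longrightarrow> y < n \<Longrightarrow> g*n + y < k*(n::nat)"
proof -
  assume "g < k" "y < n"
  hence "g*n + y < (g+1)*n" by simp
  also have "\<dots> \<le> k*n" using \<open>g<k\<close> by (intro mult_right_mono) auto
  finally show ?thesis .
qed

lemma block_index_eq_iff: "x < n \<Longrightarrow> y < n \<Longrightarrow> g*n + x = h*n + y \<longleftrightarrow> g = h \<and> x = (y::nat)"
proof
  assume "x < n" "y < n" "g*n + x = h*n + y"
  hence "(g*n+x) div n = (h*n+y) div n" "(g*n+x) mod n = (h*n+y) mod n" by simp_all
  thus "g = h \<and> x = y" using \<open>x < n\<close> \<open>y < n\<close> by simp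
qed auto

lemma block_div_less: "i < k * n \<Longrightarrow> i div n < (k::nat)"
  by (metis less_mult_imp_div_less mult.commute)

lemma mult_block_incl_index:
  assumes M: "M \<in> carrier_mat m (k*n)" and g: "g < k" and x: "x < m" and y: "y < n"
  shows "(M * block_incl k n g) $$ (x,y) = (M $$ (x, g*n+y) :: 'a::field)"
proof -
  have "(M * block_incl k n g) $$ (x,y) = (\<Sum>z\<in>{0..<k*n}. M $$ (x,z) * (if z = g*n+y then 1 else 0))"
    using M x y by (simp add: block_incl_def scalar_prod_def)
  also have "\<dots> = (\<Sum>z\<in>{0..<k*n}. if z = g*n+y then M $$ (x,z) else 0)"
    by (rule sum.cong) auto
  finally show ?thesis using block_index_less[OF g y] by simp
qed

lemma block_proj_mult_index:
  assumes M: "M \<in> carrier_mat (k*n) m" and g: "g < k" and x: "x < n" and y: "y < m"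
  shows "(block_proj k n g * M) $$ (x,y) = (M $$ (g*n+x, y) :: 'a::field)"
proof -
  have "(block_proj k n g * M) $$ (x,y) = (\<Sum>z\<in>{0..<k*n}. (if z = g*n+x then 1 else 0) * M $$ (z,y))"
    using M x y by (simp add: block_proj_def scalar_prod_def)
  also have "\<dots> = (\<Sum>z\<in>{0..<k*n}. if z = g*n+x then M $$ (z,y) else 0)"
    by (rule sum.cong) auto
  finally show ?thesis using block_index_less[OF g x] by simp
qed

lemma block_incl_mult_index:
  assumes X: "X \<in> carrier_mat n m" and x: "x < k*n" and y: "y < m"
  shows "(block_incl k n i * X) $$ (x,y) = (if x div n = i then X $$ (x mod n, y) else (0::'a::field))"
proof -
  have n: "0 < n" using x by (cases n) auto
  have "(block_incl k n i * X) $$ (x,y) = (\<Sum>z\<in>{0..<n}. (if x = i*n+z then 1 else 0) * X $$ (z,y))"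
    using X x y by (simp add: block_incl_def scalar_prod_def)
  also have "\<dots> = (\<Sum>z\<in>{0..<n}. if z = x mod n \<and> x div n = i then X $$ (z,y) else 0)"
  proof (rule sum.cong)
    fix z assume "z \<in> {0..<n}"
    hence "(x = i*n+z) = (z = x mod n \<and> x div n = i)" by (auto simp: mult.commute)
    thus "(if x = i*n+z then 1 else 0) * X $$ (z,y) = (if z = x mod n \<and> x div n = i then X $$ (z,y) else 0)"
      by simp
  qed simp
  also have "\<dots> = (if x div n = i then X $$ (x mod n, y) else 0)"
    using n by (cases "x div n = i") auto
  finally show ?thesis .
qed

lemma block_proj_incl:
  assumes "g < k" "h < k"
  shows "block_proj k n g * block_incl k n h = (if g = h then 1\<^sub>m n else (0\<^sub>m n n :: 'a::field mat))"
proof (rule eq_matI)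
  fix x y assume "x < dim_row (if g = h then 1\<^sub>m n else (0\<^sub>m n n :: 'a mat))"
    and "y < dim_col (if g = h then 1\<^sub>m n else (0\<^sub>m n n :: 'a mat))"
  hence x: "x < n" and y: "y < n" by (auto split: if_splits)
  have "(block_proj k n g * block_incl k n h) $$ (x,y) = block_incl k n h $$ (g*n+x, y)"
    by (rule block_proj_mult_index[OF _ assms(1) x y]) simp
  also have "\<dots> = (if g = h \<and> x = y then 1 else 0)"
    using block_index_less[OF assms(1) x] block_index_eq_iff[OF x y] y by (simp add: block_incl_def)
  finally show "(block_proj k n g * block_incl k n h) $$ (x,y)
      = (if g = h then 1\<^sub>m n else (0\<^sub>m n n :: 'a mat)) $$ (x,y)"
    using x y by auto
qed auto

lemma block_proj_incl_mult:
  assumes "g < k" "h < k" "X \<in> carrier_mat n m"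
  shows "block_proj k n g * (block_incl k n h * X) = (if g = h then X else (0\<^sub>m n m :: 'a::field mat))"
proof -
  have "block_proj k n g * (block_incl k n h * X) = (block_proj k n g * block_incl k n h) * X"
    using assms by (simp add: assoc_mult_mat[symmetric, OF block_proj_carrier block_incl_carrier assms(3)])
  thus ?thesis using assms by (simp add: block_proj_incl)
qed

lemma block_incl_neq_zero:
  assumes "0 < n" "g < k"
  shows "block_incl k n g \<noteq> (0\<^sub>m (k*n) n :: 'a::field mat)"
proof
  assume "block_incl k n g = (0\<^sub>m (k*n) n :: 'a mat)"
  hence "block_incl k n g $$ (g*n, 0) = (0\<^sub>m (k*n) n :: 'a mat) $$ (g*n, 0)" by simp
  thus False using block_index_less[OF assms(2) assms(1)] assms by (simp add: block_incl_def)
qed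

lemma mat_eq_by_block_cols:
  assumes M: "M \<in> carrier_mat m (k*n)" and M': "M' \<in> carrier_mat m (k*n)"
    and cols: "\<And>g. g < k \<Longrightarrow> M * block_incl k n g = M' * block_incl k n g"
  shows "M = (M' :: 'a::field mat)"
proof (rule eq_matI)
  fix x y assume "x < dim_row M'" and "y < dim_col M'"
  hence x: "x < m" and y: "y < k*n" using M' by auto
  have n: "0 < n" using y by (cases n) auto
  define g where "g = y div n"
  have g: "g < k" using y unfolding g_def by (rule block_div_less)
  have ym: "y mod n < n" using n by simp
  have yy: "g*n + y mod n = y" unfolding g_def by (metis div_mult_mod_eq)
  have "M $$ (x,y) = (M * block_incl k n g) $$ (x, y mod n)"
    using mult_block_incl_index[OF M g x ym] yy by simp
  also have "\<dots> = M' $$ (x,y)" using cols[OF g] mult_block_incl_index[OF M' g x ym] yy by simp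
  finally show "M $$ (x,y) = M' $$ (x,y)" .
qed (use M M' in auto)

section \<open>Substitution into matrices of noncommutative polynomials\<close>

lemma nc_eval_carrier:
  assumes "A \<in> carrier_mat n n" "B \<in> carrier_mat n n"
  shows "nc_eval n p A B \<in> carrier_mat n n"
  using assms by (induction p) auto

lemma nc_eval_conj:
  assumes A: "A \<in> carrier_mat n n" and B: "B \<in> carrier_mat n n"
    and S: "S \<in> carrier_mat n n" and T: "T \<in> carrier_mat n n"
    and ST: "S * T = 1\<^sub>m n" and TS: "T * S = 1\<^sub>m n"
    and A': "T * A * S = A'" and B': "T * B * S = B'"
  shows "T * nc_eval n p A B * S = nc_eval n p A' B'"
proof (induction p)
  case (NCConst c)
  have "T * (c \<cdot>\<^sub>m 1\<^sub>m n) * S = c \<cdot>\<^sub>m (T * S)" using S T by (simp add: mult_smult_dims smult_mult_dims)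
  thus ?case using TS by simp
next
  case (NCAdd p q)
  have "nc_eval n p A B \<in> carrier_mat n n" "nc_eval n q A B \<in> carrier_mat n n"
    using nc_eval_carrier[OF A B] by auto
  hence "T * (nc_eval n p A B + nc_eval n q A B) * S = T * nc_eval n p A B * S + T * nc_eval n q A B * S"
    using S T by (simp add: mult_add_dims add_mult_dims)
  thus ?case using NCAdd by simp
next
  case (NCMul p q)
  have cp: "nc_eval n p A B \<in> carrier_mat n n" "nc_eval n q A B \<in> carrier_mat n n"
    using nc_eval_carrier[OF A B] by auto
  have "(T * nc_eval n p A B * S) * (T * nc_eval n q A B * S)
      = T * (nc_eval n p A B * ((S * T) * (nc_eval n q A B * S)))"
    using cp S T by (simp add: mult_assoc_dims)
  also have "\<dots> = T * (nc_eval n p A B * nc_eval n q A B) * S" using cp S T ST by (simp add: mult_assoc_dims)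
  finally show ?case using NCMul by simp
qed (use A' B' in simp_all)

lemma nc_subst_dims[simp]:
  "dim_row (nc_subst n M A B) = dim_row M * n" "dim_col (nc_subst n M A B) = dim_col M * n"
  by (simp_all add: nc_subst_def)

lemma nc_subst_carrier[simp]: "M \<in> carrier_mat k k \<Longrightarrow> nc_subst n M A B \<in> carrier_mat (k*n) (k*n)"
  by (simp add: nc_subst_def)

lemma nc_subst_mult_block_incl_index:
  assumes M: "M \<in> carrier_mat k k" and g: "g < k" and x: "x < k*n" and y: "y < n"
  shows "(nc_subst n M A B * block_incl k n g) $$ (x,y) = nc_eval n (M $$ (x div n, g)) A B $$ (x mod n, y)"
  using mult_block_incl_index[OF nc_subst_carrier[OF M] g x y] M x y block_index_less[OF g y]
  by (simp add: nc_subst_def)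

lemma nc_subst_block_col:
  assumes M: "M \<in> carrier_mat k k" and A: "A \<in> carrier_mat n n" and B: "B \<in> carrier_mat n n"
    and g: "g < k" and i: "i < k"
    and zero: "\<And>I. I < k \<Longrightarrow> I \<noteq> i \<Longrightarrow> M $$ (I, g) = NCConst 0"
    and X: "nc_eval n (M $$ (i,g)) A B = X"
  shows "nc_subst n M A B * block_incl k n g = block_incl k n i * X"
proof -
  have Xc: "X \<in> carrier_mat n n" using nc_eval_carrier[OF A B] X by blast
  show ?thesis
  proof (rule eq_matI)
    fix x y assume "x < dim_row (block_incl k n i * X)" and "y < dim_col (block_incl k n i * X)"
    hence x: "x < k*n" and y: "y < n" using Xc by auto
    show "(nc_subst n M A B * block_incl k n g) $$ (x,y) = (block_incl k n i * X) $$ (x,y)"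
      unfolding nc_subst_mult_block_incl_index[OF M g x y] block_incl_mult_index[OF Xc x y]
      using zero[OF block_div_less[OF x]] X y by auto
  qed (use M Xc in auto)
qed

lemma nc_subst_zero_block_col:
  assumes M: "M \<in> carrier_mat k k" and g: "g < k"
    and zero: "\<And>I. I < k \<Longrightarrow> M $$ (I, g) = NCConst 0"
  shows "nc_subst n M A B * block_incl k n g = 0\<^sub>m (k*n) n"
proof (rule eq_matI)
  fix x y assume "x < dim_row (0\<^sub>m (k*n) n :: 'a mat)" and "y < dim_col (0\<^sub>m (k*n) n :: 'a mat)"
  hence x: "x < k*n" and y: "y < n" by auto
  show "(nc_subst n M A B * block_incl k n g) $$ (x,y) = (0\<^sub>m (k*n) n :: 'a mat) $$ (x,y)"
    unfolding nc_subst_mult_block_incl_index[OF M g x y] using zero[OF block_div_less[OF x]] x y by auto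
qed (use M in auto)

lemma nc_subst_block_upper:
  assumes M: "M \<in> carrier_mat k k"
    and low: "\<And>r c. r < k \<Longrightarrow> c < k \<Longrightarrow> c \<le> r \<Longrightarrow> M $$ (r,c) = NCConst 0"
  shows "strictly_upper (nc_subst n M A B :: 'a::field mat)"
  unfolding strictly_upper_def
proof (intro allI impI)
  fix i j assume ij: "i < dim_row (nc_subst n M A B)" "j < dim_col (nc_subst n M A B)" "j \<le> i"
  hence i: "i < k*n" and j: "j < k*n" using M by auto
  hence n: "0 < n" by (cases n) auto
  have "j div n \<le> i div n" using ij by (simp add: div_le_mono)
  hence "M $$ (i div n, j div n) = NCConst 0" using low block_div_less[OF i] block_div_less[OF j] by auto
  thus "nc_subst n M A B $$ (i,j) = 0" using M i j n by (simp add: nc_subst_def)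
qed

definition single_entry_cols :: "'a::zero ncpoly mat \<Rightarrow> bool" where
  "single_entry_cols M \<longleftrightarrow>
     (\<forall>g < dim_col M. \<exists>i < dim_row M. \<forall>I < dim_row M. I \<noteq> i \<longrightarrow> M $$ (I, g) = NCConst 0)"

definition nc_diag :: "nat \<Rightarrow> 'a::field ncpoly mat" where
  "nc_diag k = mat k k (\<lambda>(i,j). if i = j then NCX else NCConst 0)"

lemma nc_diag_carrier[simp]: "nc_diag k \<in> carrier_mat k k"
  and nc_diag_dims[simp]: "dim_row (nc_diag k) = k" "dim_col (nc_diag k) = k"
  by (simp_all add: nc_diag_def)

lemma nc_diag_block_col:
  assumes S: "S \<in> carrier_mat n n" and g: "g < k"
  shows "nc_subst n (nc_diag k) S S * block_incl k n g = block_incl k n g * S"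
  by (rule nc_subst_block_col[OF nc_diag_carrier S S g g]) (auto simp: nc_diag_def g)

lemma nc_diag_inverse:
  assumes S: "S \<in> carrier_mat n n" and T: "T \<in> carrier_mat n n" and ST: "S * T = 1\<^sub>m n"
  shows "nc_subst n (nc_diag k) S S * nc_subst n (nc_diag k) T T = 1\<^sub>m (k*n)"
proof (rule mat_eq_by_block_cols[of _ "k*n" k n])
  fix g assume g: "g < k"
  have dims[simp]: "dim_row S = n" "dim_col S = n" "dim_row T = n" "dim_col T = n" using S T by auto
  have "nc_subst n (nc_diag k) S S * nc_subst n (nc_diag k) T T * block_incl k n g
      = nc_subst n (nc_diag k) S S * (nc_subst n (nc_diag k) T T * block_incl k n g)"
    by (simp add: mult_assoc_dims)
  also have "\<dots> = (nc_subst n (nc_diag k) S S * block_incl k n g) * T"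
    unfolding nc_diag_block_col[OF T g] by (simp add: mult_assoc_dims)
  also have "\<dots> = block_incl k n g * (S * T)"
    unfolding nc_diag_block_col[OF S g] by (simp add: mult_assoc_dims)
  finally show "nc_subst n (nc_diag k) S S * nc_subst n (nc_diag k) T T * block_incl k n g
      = 1\<^sub>m (k * n) * block_incl k n g"
    using ST by simp
qed auto

lemma nc_subst_conj_nc_diag:
  assumes M: "M \<in> carrier_mat k k" and single: "single_entry_cols M"
    and A: "A \<in> carrier_mat n n" and B: "B \<in> carrier_mat n n"
    and A': "A' \<in> carrier_mat n n" and B': "B' \<in> carrier_mat n n"
    and S: "S \<in> carrier_mat n n" and T: "T \<in> carrier_mat n n"
    and ST: "S * T = 1\<^sub>m n" and TS: "T * S = 1\<^sub>m n"
    and hA: "T * A * S = A'" and hB: "T * B * S = B'"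
  shows "nc_subst n (nc_diag k) T T * nc_subst n M A B * nc_subst n (nc_diag k) S S = nc_subst n M A' B'"
proof (rule mat_eq_by_block_cols[of _ "k*n" k n])
  fix g assume g: "g < k"
  obtain i where i: "i < k" and zero: "\<And>I. I < k \<Longrightarrow> I \<noteq> i \<Longrightarrow> M $$ (I, g) = NCConst 0"
    using single g M unfolding single_entry_cols_def by auto
  define X where "X = nc_eval n (M $$ (i,g)) A B"
  have Xc: "X \<in> carrier_mat n n" unfolding X_def using nc_eval_carrier[OF A B] by auto
  have dims[simp]: "dim_row S = n" "dim_col S = n" "dim_row T = n" "dim_col T = n"
    "dim_row X = n" "dim_col X = n" using S T Xc by auto
  have col: "nc_subst n M A B * block_incl k n g = block_incl k n i * X"
    by (rule nc_subst_block_col[OF M A B g i zero X_def[symmetric]])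
  have "nc_subst n (nc_diag k) T T * nc_subst n M A B * nc_subst n (nc_diag k) S S * block_incl k n g
      = nc_subst n (nc_diag k) T T * (nc_subst n M A B * (nc_subst n (nc_diag k) S S * block_incl k n g))"
    using M by (simp add: mult_assoc_dims)
  also have "\<dots> = nc_subst n (nc_diag k) T T * ((nc_subst n M A B * block_incl k n g) * S)"
    unfolding nc_diag_block_col[OF S g] using M by (simp add: mult_assoc_dims)
  also have "\<dots> = (nc_subst n (nc_diag k) T T * block_incl k n i) * (X * S)"
    unfolding col using M by (simp add: mult_assoc_dims)
  also have "\<dots> = block_incl k n i * (T * X * S)"
    unfolding nc_diag_block_col[OF T i] by (simp add: mult_assoc_dims)
  also have "T * X * S = nc_eval n (M $$ (i,g)) A' B'"
    unfolding X_def by (rule nc_eval_conj[OF A B S T ST TS hA hB])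
  also have "block_incl k n i * \<dots> = nc_subst n M A' B' * block_incl k n g"
    using nc_subst_block_col[OF M A' B' g i zero refl] by simp
  finally show "nc_subst n (nc_diag k) T T * nc_subst n M A B * nc_subst n (nc_diag k) S S * block_incl k n g
      = nc_subst n M A' B' * block_incl k n g" .
qed (use M in auto)

section \<open>The wild pair\<close>

text \<open>Rows and columns 0..6 carry A and B into the corner (0, 6) of P^3, P^2 Q, P Q^2 and Q^3;
  the chain 7 \<leftarrow> 8 \<leftarrow> \<dots> \<leftarrow> 11 in Q makes Q^4 nonzero while P Q^3 = 0.\<close>

definition wild_P :: "'a::field ncpoly mat" where
  "wild_P = mat 12 12 (\<lambda>(i,j). if (i,j) \<in> {(4,6),(1,4),(2,5),(0,1),(0,2)} then NCConst 1
      else if (i,j) = (0,3) then NCX else NCConst 0)"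

definition wild_Q :: "'a::field ncpoly mat" where
  "wild_Q = mat 12 12 (\<lambda>(i,j).
      if (i,j) \<in> {(5,6),(2,4),(3,5),(0,1),(10,11),(9,10),(8,9),(7,8)} then NCConst 1
      else if (i,j) = (0,2) then NCX else if (i,j) = (0,3) then NCY else NCConst 0)"

definition wild_U :: "'a::field ncpoly mat" where
  "wild_U = mat 12 12 (\<lambda>(i,j). if i = j then NCConst 1 else wild_P $$ (i,j))"

lemma wild_carrier[simp]:
  "wild_P \<in> carrier_mat 12 12" "wild_Q \<in> carrier_mat 12 12" "wild_U \<in> carrier_mat 12 12"
  by (simp_all add: wild_P_def wild_Q_def wild_U_def)

lemma wild_dims[simp]:
  "dim_row wild_P = 12" "dim_col wild_P = 12" "dim_row wild_Q = 12" "dim_col wild_Q = 12"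
  "dim_row wild_U = 12" "dim_col wild_U = 12"
  by (simp_all add: wild_P_def wild_Q_def wild_U_def)

lemma less_12_cases: "g < (12::nat) \<Longrightarrow>
    g = 0 \<or> g = 1 \<or> g = 2 \<or> g = 3 \<or> g = 4 \<or> g = 5 \<or> g = 6 \<or> g = 7 \<or> g = 8 \<or> g = 9 \<or> g = 10 \<or> g = 11"
  by presburger

lemma single_entry_cols_wild_P: "single_entry_cols wild_P"
  unfolding single_entry_cols_def
proof (intro allI impI)
  fix g assume "g < dim_col (wild_P :: 'a ncpoly mat)"
  thus "\<exists>i<dim_row (wild_P :: 'a ncpoly mat). \<forall>I<dim_row wild_P. I \<noteq> i \<longrightarrow> (wild_P :: 'a ncpoly mat) $$ (I, g) = NCConst 0"
    by (intro exI[of _ "if g = 6 then 4 else if g = 4 then 1 else if g = 5 then 2 else 0"])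
       (auto simp: wild_P_def dest!: less_12_cases)
qed

lemma single_entry_cols_wild_Q: "single_entry_cols wild_Q"
  unfolding single_entry_cols_def
proof (intro allI impI)
  fix g assume "g < dim_col (wild_Q :: 'a ncpoly mat)"
  thus "\<exists>i<dim_row (wild_Q :: 'a ncpoly mat). \<forall>I<dim_row wild_Q. I \<noteq> i \<longrightarrow> (wild_Q :: 'a ncpoly mat) $$ (I, g) = NCConst 0"
    by (intro exI[of _ "if g = 6 then 5 else if g = 4 then 2 else if g = 5 then 3 else if g \<ge> 8 then g - 1 else 0"])
       (auto simp: wild_Q_def dest!: less_12_cases)
qed

lemma strictly_upper_wild_P: "strictly_upper (nc_subst n wild_P A B :: 'a::field mat)"
  and strictly_upper_wild_Q: "strictly_upper (nc_subst n wild_Q A B :: 'a::field mat)"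
  by (rule nc_subst_block_upper[OF wild_carrier(1)], auto simp: wild_P_def)
     (rule nc_subst_block_upper[OF wild_carrier(2)], auto simp: wild_Q_def)

lemma nc_subst_wild_U: "nc_subst n wild_U A B = 1\<^sub>m (12*n) + nc_subst n wild_P A (B :: 'a::field mat)"
proof (rule eq_matI)
  fix i j assume "i < dim_row (1\<^sub>m (12*n) + nc_subst n wild_P A B)"
    and "j < dim_col (1\<^sub>m (12*n) + nc_subst n wild_P A B)"
  hence i: "i < 12*n" and j: "j < 12*n" by auto
  hence n: "0 < n" by (cases n) auto
  have "i = j \<longleftrightarrow> i div n = j div n \<and> i mod n = j mod n" by (metis div_mult_mod_eq)
  moreover have "(wild_P :: 'a ncpoly mat) $$ (i div n, i div n) = NCConst 0"
    using block_div_less[OF i] by (auto simp: wild_P_def)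
  ultimately show "nc_subst n wild_U A B $$ (i,j) = (1\<^sub>m (12*n) + nc_subst n wild_P A B) $$ (i,j)"
    using i j n block_div_less[OF i] block_div_less[OF j] by (auto simp: nc_subst_def wild_U_def)
qed auto

context
  fixes n :: nat and A B :: "'a::field mat"
  assumes A: "A \<in> carrier_mat n n" and B: "B \<in> carrier_mat n n"
begin

lemma wild_P_block_cols:
  "nc_subst n wild_P A B * block_incl 12 n 6 = block_incl 12 n 4 * 1\<^sub>m n"
  "nc_subst n wild_P A B * block_incl 12 n 4 = block_incl 12 n 1 * 1\<^sub>m n"
  "nc_subst n wild_P A B * block_incl 12 n 5 = block_incl 12 n 2 * 1\<^sub>m n"
  "nc_subst n wild_P A B * block_incl 12 n 1 = block_incl 12 n 0 * 1\<^sub>m n"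
  "nc_subst n wild_P A B * block_incl 12 n 2 = block_incl 12 n 0 * 1\<^sub>m n"
  "nc_subst n wild_P A B * block_incl 12 n 3 = block_incl 12 n 0 * A"
  by (rule nc_subst_block_col[OF wild_carrier(1) A B]; auto simp: wild_P_def)+

lemma wild_Q_block_cols:
  "nc_subst n wild_Q A B * block_incl 12 n 6 = block_incl 12 n 5 * 1\<^sub>m n"
  "nc_subst n wild_Q A B * block_incl 12 n 4 = block_incl 12 n 2 * 1\<^sub>m n"
  "nc_subst n wild_Q A B * block_incl 12 n 5 = block_incl 12 n 3 * 1\<^sub>m n"
  "nc_subst n wild_Q A B * block_incl 12 n 1 = block_incl 12 n 0 * 1\<^sub>m n"
  "nc_subst n wild_Q A B * block_incl 12 n 2 = block_incl 12 n 0 * A"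
  "nc_subst n wild_Q A B * block_incl 12 n 3 = block_incl 12 n 0 * B"
  "nc_subst n wild_Q A B * block_incl 12 n 11 = block_incl 12 n 10 * 1\<^sub>m n"
  "nc_subst n wild_Q A B * block_incl 12 n 10 = block_incl 12 n 9 * 1\<^sub>m n"
  "nc_subst n wild_Q A B * block_incl 12 n 9 = block_incl 12 n 8 * 1\<^sub>m n"
  "nc_subst n wild_Q A B * block_incl 12 n 8 = block_incl 12 n 7 * 1\<^sub>m n"
  by (rule nc_subst_block_col[OF wild_carrier(2) A B]; auto simp: wild_Q_def)+

lemma wild_zero_block_cols:
  "nc_subst n wild_P A B * block_incl 12 n 0 = 0\<^sub>m (12*n) n"
  "nc_subst n wild_P A B * block_incl 12 n 7 = 0\<^sub>m (12*n) n"
  "nc_subst n wild_P A B * block_incl 12 n 8 = 0\<^sub>m (12*n) n"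
  "nc_subst n wild_P A B * block_incl 12 n 9 = 0\<^sub>m (12*n) n"
  "nc_subst n wild_P A B * block_incl 12 n 10 = 0\<^sub>m (12*n) n"
  "nc_subst n wild_P A B * block_incl 12 n 11 = 0\<^sub>m (12*n) n"
  "nc_subst n wild_Q A B * block_incl 12 n 0 = 0\<^sub>m (12*n) n"
  "nc_subst n wild_Q A B * block_incl 12 n 7 = 0\<^sub>m (12*n) n"
  by (rule nc_subst_zero_block_col; auto simp: wild_P_def wild_Q_def)+

lemma wild_mult_block_incl_0:
  assumes X: "X \<in> carrier_mat n m"
  shows "nc_subst n wild_P A B * (block_incl 12 n 0 * X) = 0\<^sub>m (12*n) m"
    and "nc_subst n wild_Q A B * (block_incl 12 n 0 * X) = 0\<^sub>m (12*n) m"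
proof -
  have "nc_subst n wild_P A B * (block_incl 12 n 0 * X) = (nc_subst n wild_P A B * block_incl 12 n 0) * X"
    by (rule assoc_mult_mat[symmetric, OF nc_subst_carrier[OF wild_carrier(1)] block_incl_carrier X])
  thus "nc_subst n wild_P A B * (block_incl 12 n 0 * X) = 0\<^sub>m (12*n) m"
    using wild_zero_block_cols(1) X by simp
  have "nc_subst n wild_Q A B * (block_incl 12 n 0 * X) = (nc_subst n wild_Q A B * block_incl 12 n 0) * X"
    by (rule assoc_mult_mat[symmetric, OF nc_subst_carrier[OF wild_carrier(2)] block_incl_carrier X])
  thus "nc_subst n wild_Q A B * (block_incl 12 n 0 * X) = 0\<^sub>m (12*n) m"
    using wild_zero_block_cols(7) X by simp
qed

lemmas wild_block_simps = wild_P_block_cols wild_Q_block_cols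
  wild_P_block_cols(4)[unfolded One_nat_def] wild_Q_block_cols(4)[unfolded One_nat_def]
  wild_zero_block_cols wild_mult_block_incl_0[OF A] wild_mult_block_incl_0[OF B]
  block_proj_incl block_proj_incl_mult[OF _ _ A] block_proj_incl_mult[OF _ _ B] carrier_matD[OF A] carrier_matD[OF B] mult_assoc_dims

lemma wild_PQ_commute:
  "nc_subst n wild_P A B * nc_subst n wild_Q A B = nc_subst n wild_Q A B * nc_subst n wild_P A B"
  by (rule mat_eq_by_block_cols[of _ "12*n" 12 n], auto dest!: less_12_cases simp: wild_block_simps)

lemma wild_P_cube:
  "nc_subst n wild_P A B * nc_subst n wild_P A B * nc_subst n wild_P A B
    = block_incl 12 n 0 * block_proj 12 n 6"
  by (rule mat_eq_by_block_cols[of _ "12*n" 12 n], auto dest!: less_12_cases simp: wild_block_simps)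

lemma wild_P2_Q:
  "nc_subst n wild_P A B * nc_subst n wild_P A B * nc_subst n wild_Q A B
    = block_incl 12 n 0 * block_proj 12 n 6"
  by (rule mat_eq_by_block_cols[of _ "12*n" 12 n], auto dest!: less_12_cases simp: wild_block_simps)

lemma wild_P_Q2:
  "nc_subst n wild_P A B * nc_subst n wild_Q A B * nc_subst n wild_Q A B
    = block_incl 12 n 0 * A * block_proj 12 n 6"
  by (rule mat_eq_by_block_cols[of _ "12*n" 12 n], auto dest!: less_12_cases simp: wild_block_simps)

lemma wild_Q_cube_proj:
  "block_proj 12 n 0 * (nc_subst n wild_Q A B * nc_subst n wild_Q A B * nc_subst n wild_Q A B)
    = B * block_proj 12 n 6"
  by (rule mat_eq_by_block_cols[of _ "n" 12 n], auto dest!: less_12_cases simp: wild_block_simps)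

lemma wild_Q_cube_incl:
  "nc_subst n wild_Q A B * nc_subst n wild_Q A B * nc_subst n wild_Q A B * block_incl 12 n 6
    = block_incl 12 n 0 * B"
  by (auto simp: wild_block_simps)

lemma wild_P_Q3:
  "nc_subst n wild_P A B * nc_subst n wild_Q A B * nc_subst n wild_Q A B * nc_subst n wild_Q A B
    = 0\<^sub>m (12*n) (12*n)"
  by (rule mat_eq_by_block_cols[of _ "12*n" 12 n], auto dest!: less_12_cases simp: wild_block_simps)

lemma wild_Q_neq_zero:
  assumes "0 < n"
  shows "nc_subst n wild_Q A B \<noteq> 0\<^sub>m (12*n) (12*n)"
proof
  assume "nc_subst n wild_Q A B = 0\<^sub>m (12*n) (12*n)"
  hence "nc_subst n wild_Q A B * block_incl 12 n 6 = 0\<^sub>m (12*n) n" by simp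
  thus False using wild_Q_block_cols(1) block_incl_neq_zero[OF assms, of 5 12, where 'a='a] by simp
qed

lemma wild_Q4_neq_zero:
  assumes "0 < n"
  shows "nc_subst n wild_Q A B * nc_subst n wild_Q A B * nc_subst n wild_Q A B * nc_subst n wild_Q A B
    \<noteq> 0\<^sub>m (12*n) (12*n)"
proof
  assume "nc_subst n wild_Q A B * nc_subst n wild_Q A B * nc_subst n wild_Q A B * nc_subst n wild_Q A B
    = 0\<^sub>m (12*n) (12*n)"
  hence "nc_subst n wild_Q A B * nc_subst n wild_Q A B * nc_subst n wild_Q A B * nc_subst n wild_Q A B
    * block_incl 12 n 11 = 0\<^sub>m (12*n) n" by simp
  moreover have "nc_subst n wild_Q A B * nc_subst n wild_Q A B * nc_subst n wild_Q A B * nc_subst n wild_Q A B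
    * block_incl 12 n 11 = block_incl 12 n 7"
    by (auto simp: wild_block_simps)
  ultimately show False using block_incl_neq_zero[OF assms, of 7 12, where 'a='a] by simp
qed

end

section \<open>Rigidity of similarities between the spaces\<close>

lemma det_conj_eq_zero:
  assumes "M \<in> carrier_mat N N" "S \<in> carrier_mat N N" "T \<in> carrier_mat N N" "det M = 0"
  shows "det (T * M * S) = (0::'a::field)"
  using assms det_mult[OF mult_carrier_mat[OF assms(3,1)] assms(2)] det_mult[OF assms(3,1)] by simp

text \<open>The image of the unipotent U = I + P must again be unipotent and that of the nilpotent Q
  nilpotent, which the determinant of a combination of U' and Q' detects.\<close>

lemma conj_unipotent_span_coeffs:
  fixes P Q P' Q' S T :: "'a::field mat"
  assumes N: "0 < N"
    and P: "P \<in> carrier_mat N N" and Q: "Q \<in> carrier_mat N N"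
    and P': "P' \<in> carrier_mat N N" and Q': "Q' \<in> carrier_mat N N"
    and S: "S \<in> carrier_mat N N" and T: "T \<in> carrier_mat N N" and TS: "T * S = 1\<^sub>m N"
    and upper: "strictly_upper P" "strictly_upper Q" "strictly_upper P'" "strictly_upper Q'"
    and hU: "T * (1\<^sub>m N + P) * S = a \<cdot>\<^sub>m (1\<^sub>m N + P') + b \<cdot>\<^sub>m Q'"
    and hQ: "T * Q * S = c \<cdot>\<^sub>m (1\<^sub>m N + P') + d \<cdot>\<^sub>m Q'"
  shows "T * P * S = P' + b \<cdot>\<^sub>m Q'" and "T * Q * S = d \<cdot>\<^sub>m Q'"
proof -
  have det_comb: "det (\<alpha> \<cdot>\<^sub>m (1\<^sub>m N + P') + \<gamma> \<cdot>\<^sub>m Q' + \<delta> \<cdot>\<^sub>m 1\<^sub>m N) = (\<alpha> + \<delta>) ^ N" for \<alpha> \<gamma> \<delta>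
    by (rule det_unipotent_comb[OF P' Q' upper(3,4)])
  have "c \<cdot>\<^sub>m (1\<^sub>m N + P') + d \<cdot>\<^sub>m Q' = c \<cdot>\<^sub>m (1\<^sub>m N + P') + d \<cdot>\<^sub>m Q' + 0 \<cdot>\<^sub>m 1\<^sub>m N"
    using P' Q' by (intro eq_matI) auto
  hence "c ^ N = 0"
    using det_conj_eq_zero[OF Q S T det_strictly_upper[OF Q upper(2) N]] hQ det_comb[of c d 0] by simp
  thus "T * Q * S = d \<cdot>\<^sub>m Q'" using hQ P' Q' by (auto intro!: eq_matI)
  have "T * (1\<^sub>m N + P) * S = T * S + T * P * S"
    using P S T by (simp add: mult_add_dims add_mult_dims)
  hence TPS: "T * P * S = a \<cdot>\<^sub>m (1\<^sub>m N + P') + b \<cdot>\<^sub>m Q' + (-1) \<cdot>\<^sub>m 1\<^sub>m N"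
    using hU TS P P' Q' S T
    by (intro eq_matI) (auto simp: algebra_simps dest!: arg_cong[of _ _ "\<lambda>M. M $$ _"])
  moreover have "det (T * P * S) = 0"
    by (rule det_conj_eq_zero[OF P S T det_strictly_upper[OF P upper(1) N]])
  ultimately have "(a + -1) ^ N = 0" using det_comb[of a b "-1"] by simp
  thus "T * P * S = P' + b \<cdot>\<^sub>m Q'" using TPS P' Q' by (auto intro!: eq_matI)
qed

lemma span_conj_intertwines:
  fixes P Q P' Q' S T :: "'a::field mat"
  assumes N: "0 < N"
    and P: "P \<in> carrier_mat N N" and Q: "Q \<in> carrier_mat N N"
    and P': "P' \<in> carrier_mat N N" and Q': "Q' \<in> carrier_mat N N"
    and S: "S \<in> carrier_mat N N" and T: "T \<in> carrier_mat N N"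
    and ST: "S * T = 1\<^sub>m N" and TS: "T * S = 1\<^sub>m N"
    and upper: "strictly_upper P" "strictly_upper Q" "strictly_upper P'" "strictly_upper Q'"
    and hU: "T * (1\<^sub>m N + P) * S = a \<cdot>\<^sub>m (1\<^sub>m N + P') + b \<cdot>\<^sub>m Q'"
    and hQ: "T * Q * S = c \<cdot>\<^sub>m (1\<^sub>m N + P') + d \<cdot>\<^sub>m Q'"
    and PQ3: "P * Q * Q * Q = 0\<^sub>m N N" and P'Q'3: "P' * Q' * Q' * Q' = 0\<^sub>m N N"
    and Q'4: "Q' * Q' * Q' * Q' \<noteq> 0\<^sub>m N N" and Q_neq: "Q \<noteq> 0\<^sub>m N N"
  shows "P * S = S * P'" and "Q * S = d \<cdot>\<^sub>m (S * Q')"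
proof -
  have dims[simp]: "dim_row P = N" "dim_col P = N" "dim_row Q = N" "dim_col Q = N"
    "dim_row P' = N" "dim_col P' = N" "dim_row Q' = N" "dim_col Q' = N"
    "dim_row S = N" "dim_col S = N" "dim_row T = N" "dim_col T = N"
    using assms by auto
  note simps = mult_assoc_dims smult_mult_dims mult_smult_dims smult_smult_mat one_smult_mat
  note TPS = conj_unipotent_span_coeffs(1)[OF N P Q P' Q' S T TS upper hU hQ]
  note TQS = conj_unipotent_span_coeffs(2)[OF N P Q P' Q' S T TS upper hU hQ]
  have ST_cancel: "S * (T * Z) = Z" if "dim_row Z = N" for Z
  proof -
    have "S * (T * Z) = (S * T) * Z" using that by (simp add: simps)
    thus ?thesis using that ST by simp
  qed
  have "d \<noteq> 0"
  proof
    assume "d = 0"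
    hence "T * Q * S = 0\<^sub>m N N" using TQS by (auto intro!: eq_matI)
    moreover have "S * (T * Q * S) * T = (S * T) * Q * (S * T)" by (simp add: simps)
    ultimately show False using Q_neq ST by simp
  qed
  \<comment> \<open>conjugating P Q^3 = 0 leaves b d^3 Q'^4 = 0\<close>
  have "T * (P * Q * Q * Q) * S = (T * P * S) * (T * Q * S) * (T * Q * S) * (T * Q * S)"
    by (simp add: simps ST_cancel)
  hence "0\<^sub>m N N = (P' + b \<cdot>\<^sub>m Q') * (d \<cdot>\<^sub>m Q') * (d \<cdot>\<^sub>m Q') * (d \<cdot>\<^sub>m Q')"
    using PQ3 TPS TQS by simp
  also have "\<dots> = (d*d*d) \<cdot>\<^sub>m (P' * Q' * Q' * Q') + (b*d*d*d) \<cdot>\<^sub>m (Q' * Q' * Q' * Q')"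
    by (simp add: simps add_mult_dims smult_add_dims mult_ac)
  also have "\<dots> = (b*d*d*d) \<cdot>\<^sub>m (Q' * Q' * Q' * Q')"
    using P'Q'3 by (intro eq_matI) auto
  finally have "b*d*d*d = 0" using smult_eq_zero_mat[of "b*d*d*d" "Q' * Q' * Q' * Q'"] Q'4 by simp
  hence "T * P * S = P'" using TPS \<open>d \<noteq> 0\<close> by (auto intro!: eq_matI)
  moreover have "S * (T * P * S) = (S * T) * (P * S)" "S * (T * Q * S) = (S * T) * (Q * S)"
    by (simp_all add: simps)
  ultimately show "P * S = S * P'" and "Q * S = d \<cdot>\<^sub>m (S * Q')"
    using TQS ST by (simp_all add: simps)
qed

lemma corner_block_invertible:
  fixes S T E E' R R' :: "'a::field mat"
  assumes S: "S \<in> carrier_mat N N" and T: "T \<in> carrier_mat N N"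
    and ST: "S * T = 1\<^sub>m N" and TS: "T * S = 1\<^sub>m N"
    and E: "E \<in> carrier_mat N n" and E': "E' \<in> carrier_mat N n"
    and R: "R \<in> carrier_mat n N" and R': "R' \<in> carrier_mat n N"
    and R'E: "R' * E = 1\<^sub>m n" and RE': "R * E' = 1\<^sub>m n"
    and comm: "E * R * S = S * (E * R)"
  shows "R * S = (R' * S * E) * R" and "R * (S * E') = R' * S * E"
    and "(R' * S * E) * (R' * T * E) = 1\<^sub>m n" and "(R' * T * E) * (R' * S * E) = 1\<^sub>m n"
proof -
  have dims[simp]: "dim_row S = N" "dim_col S = N" "dim_row T = N" "dim_col T = N"
    "dim_row E = N" "dim_col E = n" "dim_row E' = N" "dim_col E' = n"
    "dim_row R = n" "dim_col R = N" "dim_row R' = n" "dim_col R' = N"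
    using assms by auto
  have R'E_cancel: "R' * (E * Z) = Z" if "dim_row Z = n" for Z
  proof -
    have "R' * (E * Z) = (R' * E) * Z" using that by (simp add: mult_assoc_dims)
    thus ?thesis using that R'E by simp
  qed
  have ST_cancel: "S * (T * Z) = Z" if "dim_row Z = N" for Z
  proof -
    have "S * (T * Z) = (S * T) * Z" using that by (simp add: mult_assoc_dims)
    thus ?thesis using that ST by simp
  qed
  have "E * R * T = (T * S) * (E * R) * T" using TS by simp
  also have "\<dots> = T * (S * (E * R)) * T" by (simp add: mult_assoc_dims)
  also have "\<dots> = T * (E * R * S) * T" using comm by simp
  also have "\<dots> = T * (E * R) * (S * T)" by (simp add: mult_assoc_dims)
  finally have commT: "T * (E * R) = E * R * T" using ST by simp
  have "R' * (E * R * S) = R' * (S * (E * R))" using comm by simp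
  thus RS: "R * S = (R' * S * E) * R" by (simp add: mult_assoc_dims R'E_cancel)
  have "R' * (T * (E * R)) = R' * (E * R * T)" using commT by simp
  hence RT: "R * T = (R' * T * E) * R" by (simp add: mult_assoc_dims R'E_cancel)
  have "R * (S * E') = (R * S) * E'" by (simp add: mult_assoc_dims)
  also have "\<dots> = (R' * S * E) * (R * E')" unfolding RS by (simp add: mult_assoc_dims)
  finally show "R * (S * E') = R' * S * E" using RE' by simp
  have "1\<^sub>m n = R * (S * (T * E'))" using RE' by (simp add: ST_cancel)
  also have "\<dots> = (R * S) * T * E'" by (simp add: mult_assoc_dims)
  also have "\<dots> = (R' * S * E) * (R * T) * E'" unfolding RS by (simp add: mult_assoc_dims)
  also have "\<dots> = (R' * S * E) * (R' * T * E) * (R * E')" unfolding RT by (simp add: mult_assoc_dims)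
  finally show st: "(R' * S * E) * (R' * T * E) = 1\<^sub>m n" using RE' by simp
  show "(R' * T * E) * (R' * S * E) = 1\<^sub>m n"
    by (rule mat_mult_left_right_inverse[OF _ _ st]) (use R' S T E in auto)
qed

lemma corner_similar_pairs:
  fixes P Q P' Q' S T E E' R R' A B A' B' :: "'a::field mat"
  assumes n: "0 < n"
    and P: "P \<in> carrier_mat N N" and Q: "Q \<in> carrier_mat N N"
    and P': "P' \<in> carrier_mat N N" and Q': "Q' \<in> carrier_mat N N"
    and S: "S \<in> carrier_mat N N" and T: "T \<in> carrier_mat N N"
    and ST: "S * T = 1\<^sub>m N" and TS: "T * S = 1\<^sub>m N"
    and E: "E \<in> carrier_mat N n" and E': "E' \<in> carrier_mat N n"
    and R: "R \<in> carrier_mat n N" and R': "R' \<in> carrier_mat n N"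
    and R'E: "R' * E = 1\<^sub>m n" and RE': "R * E' = 1\<^sub>m n"
    and A: "A \<in> carrier_mat n n" and B: "B \<in> carrier_mat n n"
    and A': "A' \<in> carrier_mat n n" and B': "B' \<in> carrier_mat n n"
    and PS: "P * S = S * P'" and QS: "Q * S = d \<cdot>\<^sub>m (S * Q')"
    and P3: "P * P * P = E * R" and P'3: "P' * P' * P' = E * R"
    and P2Q: "P * P * Q = E * R" and P'2Q': "P' * P' * Q' = E * R"
    and PQ2: "P * Q * Q = E * A * R" and P'Q'2: "P' * Q' * Q' = E * A' * R"
    and Q3: "R' * (Q * Q * Q) = B * R" and Q'3: "Q' * Q' * Q' * E' = E * B'"
  shows "similar_pairs n A B A' B'"
proof -
  have dims[simp]: "dim_row P = N" "dim_col P = N" "dim_row Q = N" "dim_col Q = N"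
    "dim_row P' = N" "dim_col P' = N" "dim_row Q' = N" "dim_col Q' = N"
    "dim_row S = N" "dim_col S = N" "dim_row T = N" "dim_col T = N"
    "dim_row E = N" "dim_col E = n" "dim_row E' = N" "dim_col E' = n"
    "dim_row R = n" "dim_col R = N" "dim_row R' = n" "dim_col R' = N"
    "dim_row A = n" "dim_col A = n" "dim_row B = n" "dim_col B = n"
    "dim_row A' = n" "dim_col A' = n" "dim_row B' = n" "dim_col B' = n"
    using assms by auto
  note simps = mult_assoc_dims smult_mult_dims mult_smult_dims smult_smult_mat one_smult_mat
  have PS_right: "P * (S * Z) = S * (P' * Z)" if "dim_row Z = N" for Z
    using that PS by (simp add: simps flip: mult_assoc_dims)
  have QS_right: "Q * (S * Z) = d \<cdot>\<^sub>m (S * (Q' * Z))" if "dim_row Z = N" for Z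
    using that QS by (simp add: simps flip: mult_assoc_dims)
  have R'E_cancel: "R' * (E * Z) = Z" if "dim_row Z = n" for Z
  proof -
    have "R' * (E * Z) = (R' * E) * Z" using that by (simp add: simps)
    thus ?thesis using that R'E by simp
  qed
  define \<sigma> where "\<sigma> = R' * S * E"
  define \<tau> where "\<tau> = R' * T * E"
  have "P * P * P * S = S * (P' * P' * P')" by (simp add: simps PS_right PS)
  hence "E * R * S = S * (E * R)" by (simp only: P3 P'3)
  note corner = corner_block_invertible[OF S T ST TS E E' R R' R'E RE' this, folded \<sigma>_def \<tau>_def]
  have \<sigma>: "\<sigma> \<in> carrier_mat n n" "\<tau> \<in> carrier_mat n n" unfolding \<sigma>_def \<tau>_def using E R' S T by auto
  have "\<sigma> \<noteq> 0\<^sub>m n n"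
  proof
    assume "\<sigma> = 0\<^sub>m n n"
    hence "(1\<^sub>m n :: 'a mat) $$ (0,0) = 0\<^sub>m n n $$ (0,0)" using corner(3) \<sigma> by simp
    thus False using n by simp
  qed
  \<comment> \<open>R' (\<cdot>) E' applied to P^2 Q S = d S P'^2 Q' gives \<sigma> = d \<sigma>\<close>
  have "P * P * Q * S = d \<cdot>\<^sub>m (S * (P' * P' * Q'))" by (simp add: simps PS_right PS QS_right QS)
  hence "R' * (E * R * S) * E' = R' * (d \<cdot>\<^sub>m (S * (E * R))) * E'" by (simp only: P2Q P'2Q')
  hence "R * (S * E') = d \<cdot>\<^sub>m (R' * (S * E) * (R * E'))" by (simp add: simps R'E_cancel)
  hence "d \<cdot>\<^sub>m \<sigma> = \<sigma>" using corner(2) RE' \<sigma> unfolding \<sigma>_def by (simp add: simps)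
  hence d: "d = 1" using smult_fixed_mat_eq_one \<open>\<sigma> \<noteq> 0\<^sub>m n n\<close> \<sigma> by fastforce
  have "P * Q * Q * S = S * (P' * Q' * Q')" by (simp add: simps PS_right PS QS_right QS d)
  hence "R' * (E * A * R * S) * E' = R' * (S * (E * A' * R)) * E'" by (simp only: PQ2 P'Q'2)
  hence "A * (R * (S * E')) = R' * (S * E) * A' * (R * E')" by (simp add: simps R'E_cancel)
  hence A_\<sigma>: "A * \<sigma> = \<sigma> * A'" using corner(2) RE' \<sigma> unfolding \<sigma>_def by (simp add: simps)
  have "R' * (Q * Q * Q) * S * E' = R' * S * (Q' * Q' * Q' * E')"
    by (simp add: simps QS_right QS d)
  hence "B * R * S * E' = R' * S * (E * B')" by (simp only: Q3 Q'3)
  hence B_\<sigma>: "B * \<sigma> = \<sigma> * B'" using corner(2) \<sigma> unfolding \<sigma>_def by (simp add: simps)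
  show ?thesis unfolding similar_pairs_def
  proof (intro exI conjI)
    have "\<tau> * A * \<sigma> = (\<tau> * \<sigma>) * A'" using A_\<sigma> \<sigma> by (simp add: simps)
    thus "\<tau> * A * \<sigma> = A'" using corner(4) by simp
    have "\<tau> * B * \<sigma> = (\<tau> * \<sigma>) * B'" using B_\<sigma> \<sigma> by (simp add: simps)
    thus "\<tau> * B * \<sigma> = B'" using corner(4) by simp
  qed (use \<sigma> corner in auto)
qed

lemma wild_pair_comm_2space_nonsing:
  assumes n: "0 < n" and A: "A \<in> carrier_mat n n" and B: "B \<in> carrier_mat n n"
  shows "comm_2space_nonsing (nc_subst n wild_U A B) (nc_subst n wild_Q A (B :: 'a::field mat))"
proof -
  let ?U = "nc_subst n wild_U A B" and ?P = "nc_subst n wild_P A B" and ?Q = "nc_subst n wild_Q A B"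
  have U: "?U = 1\<^sub>m (12*n) + ?P" by (rule nc_subst_wild_U)
  have "?U * ?Q = ?Q + ?P * ?Q" unfolding U by (simp add: add_mult_dims)
  moreover have "?Q * ?U = ?Q + ?Q * ?P" unfolding U by (simp add: mult_add_dims)
  ultimately have comm: "?U * ?Q = ?Q * ?U" using wild_PQ_commute[OF A B] by simp
  have indep: "a = 0 \<and> b = 0" if zero: "a \<cdot>\<^sub>m ?U + b \<cdot>\<^sub>m ?Q = 0\<^sub>m (12*n) (12*n)" for a b
  proof -
    have "0 < 12 * n" "5*n < 12*n" "6*n < 12*n" using n by auto
    moreover have "?P $$ (0,0) = 0" "?Q $$ (0,0) = 0"
      using strictly_upper_wild_P[of n A B] strictly_upper_wild_Q[of n A B] n
      unfolding strictly_upper_def by simp_all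
    moreover have "?P $$ (5*n,6*n) = 0" "?Q $$ (5*n,6*n) = 1"
      using n by (simp_all add: nc_subst_def wild_P_def wild_Q_def)
    moreover have "(a \<cdot>\<^sub>m ?U + b \<cdot>\<^sub>m ?Q) $$ (0,0) = 0" "(a \<cdot>\<^sub>m ?U + b \<cdot>\<^sub>m ?Q) $$ (5*n,6*n) = 0"
      using zero n by simp_all
    ultimately show ?thesis unfolding U by simp
  qed
  have "det ?U = 1 ^ (12*n)" unfolding U
    by (rule det_upper_triangular_const_diag[of _ "12*n"])
       (use strictly_upper_wild_P[of n A B] in \<open>auto simp: strictly_upper_def\<close>)
  hence "invertible_mat ?U" by (intro invertible_mat_if_det_nonzero[of _ "12*n"]) auto
  moreover have "?U \<in> span2 ?U ?Q"
    unfolding span2_def by (intro CollectI exI[of _ 1] exI[of _ 0]) (auto intro!: eq_matI)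
  ultimately show ?thesis unfolding comm_2space_nonsing_def comm_2space_def
    using comm indep by (intro conjI exI[of _ "12*n"] bexI[of _ ?U]) auto
qed

lemma conj_lincomb:
  assumes "X \<in> carrier_mat N N" "Y \<in> carrier_mat N N" "S \<in> carrier_mat N N" "T \<in> carrier_mat N N"
  shows "T * (a \<cdot>\<^sub>m X + b \<cdot>\<^sub>m Y) * S = a \<cdot>\<^sub>m (T * X * S) + b \<cdot>\<^sub>m (T * Y * (S::'a::field mat))"
  using assms by (simp add: mult_add_dims add_mult_dims mult_smult_dims smult_mult_dims)

lemma similar_spaces_if_conj_basis:
  assumes X: "X \<in> carrier_mat N N" and Y: "Y \<in> carrier_mat N N"
    and S: "S \<in> carrier_mat N N" and T: "T \<in> carrier_mat N N"
    and ST: "S * T = 1\<^sub>m N" and TS: "T * S = 1\<^sub>m N"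
    and X': "T * X * S = X'" and Y': "T * Y * S = (Y' :: 'a::field mat)"
  shows "similar_spaces X Y X' Y'"
  unfolding similar_spaces_def
proof (intro exI conjI)
  have "T * (a \<cdot>\<^sub>m X + b \<cdot>\<^sub>m Y) * S = a \<cdot>\<^sub>m X' + b \<cdot>\<^sub>m Y'" for a b
    using conj_lincomb[OF X Y S T] X' Y' by simp
  thus "(\<lambda>Z. T * Z * S) ` span2 X Y = span2 X' Y'" unfolding span2_def image_def by auto metis
qed (use assms in auto)

lemma similar_spaces_if_similar_pairs:
  assumes A: "A \<in> carrier_mat n n" and B: "B \<in> carrier_mat n n"
    and A': "A' \<in> carrier_mat n n" and B': "B' \<in> carrier_mat n n"
    and "similar_pairs n A B A' B'"
  shows "similar_spaces (nc_subst n wild_U A B) (nc_subst n wild_Q A B)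
    (nc_subst n wild_U A' B') (nc_subst n wild_Q A' (B' :: 'a::field mat))"
proof -
  from assms(5) obtain S T where S: "S \<in> carrier_mat n n" and T: "T \<in> carrier_mat n n"
    and ST: "S * T = 1\<^sub>m n" and TS: "T * S = 1\<^sub>m n" and hA: "T * A * S = A'" and hB: "T * B * S = B'"
    unfolding similar_pairs_def by blast
  let ?S = "nc_subst n (nc_diag 12) S S" and ?T = "nc_subst n (nc_diag 12) T T"
  have ST': "?S * ?T = 1\<^sub>m (12*n)" and TS': "?T * ?S = 1\<^sub>m (12*n)"
    using nc_diag_inverse[OF S T ST] nc_diag_inverse[OF T S TS] by simp_all
  have P': "?T * nc_subst n wild_P A B * ?S = nc_subst n wild_P A' B'"
    by (rule nc_subst_conj_nc_diag[OF wild_carrier(1) single_entry_cols_wild_P A B A' B' S T ST TS hA hB])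
  have Q': "?T * nc_subst n wild_Q A B * ?S = nc_subst n wild_Q A' B'"
    by (rule nc_subst_conj_nc_diag[OF wild_carrier(2) single_entry_cols_wild_Q A B A' B' S T ST TS hA hB])
  have "?T * nc_subst n wild_U A B * ?S = ?T * ?S + ?T * nc_subst n wild_P A B * ?S"
    by (simp add: nc_subst_wild_U mult_add_dims add_mult_dims)
  hence U': "?T * nc_subst n wild_U A B * ?S = nc_subst n wild_U A' B'"
    using TS' P' by (simp add: nc_subst_wild_U)
  show ?thesis by (rule similar_spaces_if_conj_basis[OF _ _ _ _ ST' TS' U' Q']) auto
qed

lemma similar_pairs_if_similar_spaces:
  assumes n: "0 < n" and A: "A \<in> carrier_mat n n" and B: "B \<in> carrier_mat n n"
    and A': "A' \<in> carrier_mat n n" and B': "B' \<in> carrier_mat n n"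
    and "similar_spaces (nc_subst n wild_U A B) (nc_subst n wild_Q A B)
      (nc_subst n wild_U A' B') (nc_subst n wild_Q A' (B' :: 'a::field mat))"
  shows "similar_pairs n A B A' B'"
proof -
  let ?U = "nc_subst n wild_U A B" and ?Q = "nc_subst n wild_Q A B"
  let ?U' = "nc_subst n wild_U A' B'" and ?Q' = "nc_subst n wild_Q A' B'"
  from assms(6) obtain N S T where S: "S \<in> carrier_mat N N" and T: "T \<in> carrier_mat N N"
    and ST: "S * T = 1\<^sub>m N" and TS: "T * S = 1\<^sub>m N" and U: "?U \<in> carrier_mat N N"
    and image: "(\<lambda>X. T * X * S) ` span2 ?U ?Q = span2 ?U' ?Q'"
    unfolding similar_spaces_def by blast
  have N: "N = 12*n" using U by auto
  have "?U \<in> span2 ?U ?Q" "?Q \<in> span2 ?U ?Q" unfolding span2_def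
    by (intro CollectI exI[of _ 1] exI[of _ 0] exI[of _ 0]; auto intro!: eq_matI)+
  hence "T * ?U * S \<in> span2 ?U' ?Q'" "T * ?Q * S \<in> span2 ?U' ?Q'" using image by blast+
  then obtain a b c d where hU: "T * ?U * S = a \<cdot>\<^sub>m ?U' + b \<cdot>\<^sub>m ?Q'"
    and hQ: "T * ?Q * S = c \<cdot>\<^sub>m ?U' + d \<cdot>\<^sub>m ?Q'"
    unfolding span2_def by auto
  note similarity = S[unfolded N] T[unfolded N] ST[unfolded N] TS[unfolded N]
  have "nc_subst n wild_P A B * S = S * nc_subst n wild_P A' B'"
    "nc_subst n wild_Q A B * S = d \<cdot>\<^sub>m (S * nc_subst n wild_Q A' B')"
    using span_conj_intertwines[OF _ _ _ _ _ similarity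
      strictly_upper_wild_P strictly_upper_wild_Q strictly_upper_wild_P strictly_upper_wild_Q
      hU[unfolded nc_subst_wild_U] hQ[unfolded nc_subst_wild_U]
      wild_P_Q3[OF A B] wild_P_Q3[OF A' B'] wild_Q4_neq_zero[OF A' B' n] wild_Q_neq_zero[OF A B n]] n
    by simp_all
  thus ?thesis
    by (intro corner_similar_pairs[OF n _ _ _ _ similarity
          block_incl_carrier block_incl_carrier block_proj_carrier block_proj_carrier
          block_proj_incl[of 0 12 0, simplified] block_proj_incl[of 6 12 6, simplified] A B A' B'
          _ _ wild_P_cube[OF A B] wild_P_cube[OF A' B'] wild_P2_Q[OF A B] wild_P2_Q[OF A' B']
          wild_P_Q2[OF A B] wild_P_Q2[OF A' B'] wild_Q_cube_proj[OF A B] wild_Q_cube_incl[OF A' B']])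
       simp_all
qed

lemma wild_2space_problem_comm_2space_nonsing:
  "wild_2space_problem (comm_2space_nonsing :: 'a::field mat \<Rightarrow> 'a mat \<Rightarrow> bool)"
  unfolding wild_2space_problem_def
  by (rule exI[of _ 12], rule exI[of _ wild_U], rule exI[of _ wild_Q])
     (auto simp: Suc_le_eq intro: wild_pair_comm_2space_nonsing
       similar_pairs_if_similar_spaces similar_spaces_if_similar_pairs)

lemma wild_2space_problem_mono:
  assumes "wild_2space_problem Obj" and "\<And>P Q. Obj P Q \<Longrightarrow> Obj' P Q"
  shows "wild_2space_problem Obj'"
  using assms unfolding wild_2space_problem_def by meson

theorem theorem1:
  shows "wild_2space_problem (comm_2space :: 'a::field mat \<Rightarrow> 'a mat \<Rightarrow> bool) \<and>
    (card (UNIV :: 'a set) \<noteq> 2 \<longrightarrow> wild_2space_problem (comm_2space_nonsing :: 'a mat \<Rightarrow> 'a mat \<Rightarrow> bool))"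
  using wild_2space_problem_comm_2space_nonsing
    wild_2space_problem_mono[OF wild_2space_problem_comm_2space_nonsing]
  unfolding comm_2space_nonsing_def by blast

end
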